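(* There is no line $\ell$ of $\mathrm{PG}(3,q)$ with plane orbit distribution $OD_2(\ell)=[1,0,0,d_2,e_2]$ with $d_2\ge 1$.
   Context: Let $q$ be a power of a prime $p\neq 2,3$. In $\mathrm{PG}(3,q)$ with coordinates $(Y_0,\dots,Y_3)$, the twisted cubic is $\mathcal{C}=\{(1,t,t^2,t^3):t\in\mathbb{F}_q\}\cup\{(0,0,0,1)\}$. Osculating planes: $\Pi(t):-t^3Y_0+3t^2Y_1-3tY_2+Y_3=0$ ($t\in\mathbb{F}_q$), $\Pi(\infty):Y_0=0$. Plane classes: $\mathcal{H}_1$ = osculating planes; $\mathcal{H}_2$ = planes meeting $\mathcal{C}$ in exactly two points; $\mathcal{H}_3$ = planes meeting $\mathcal{C}$ in exactly three points; $\mathcal{H}_4$ = non-osculating planes meeting $\mathcal{C}$ in exactly one point; $\mathcal{H}_5$ = planes disjoint from $\mathcal{C}$. $OD_2(\ell)=[a_2,b_2,c_2,d_2,e_2]$ lists the numbers of planes through $\ell$ in $\mathcal{H}_1,\dots,\mathcal{H}_5$ respectively. *)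

theory Defs
  imports "HOL-Computational_Algebra.Primes"
begin

text \<open>Homogeneous coordinates (Y0,Y1,Y2,Y3) of PG(3,q); a plane is given by a nonzero
coefficient vector c, the plane being c0 Y0 + c1 Y1 + c2 Y2 + c3 Y3 = 0.\<close>

type_synonym 'a pt = "'a \<times> 'a \<times> 'a \<times> 'a"

definition pdot :: "'a::comm_ring pt \<Rightarrow> 'a pt \<Rightarrow> 'a" where
  "pdot c y = (case c of (c0,c1,c2,c3) \<Rightarrow> case y of (y0,y1,y2,y3) \<Rightarrow>
      c0*y0 + c1*y1 + c2*y2 + c3*y3)"

definition smul_pt :: "'a::times \<Rightarrow> 'a pt \<Rightarrow> 'a pt" where
  "smul_pt l x = (case x of (x0,x1,x2,x3) \<Rightarrow> (l*x0, l*x1, l*x2, l*x3))"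

definition proj_class :: "'a::field pt \<Rightarrow> 'a pt set" where
  "proj_class x = {smul_pt l x | l. l \<noteq> 0}"

text \<open>Twisted cubic, one normalized representative per point (pairwise non-proportional).\<close>
definition twisted_cubic :: "'a::field pt set" where
  "twisted_cubic = {(1, t, t^2, t^3) | t. True} \<union> {(0,0,0,1)}"

definition osc_plane :: "'a::field \<Rightarrow> 'a pt" where
  "osc_plane t = (-(t^3), 3*t^2, -(3*t), 1)"

definition is_osculating :: "'a::field pt \<Rightarrow> bool" where
  "is_osculating c \<longleftrightarrow>
     (\<exists>t. proj_class c = proj_class (osc_plane t)) \<or> proj_class c = proj_class (1,0,0,0)"

definition meet_count :: "'a::field pt \<Rightarrow> nat" where
  "meet_count c = card {P \<in> twisted_cubic. pdot c P = 0}"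

definition plane_class :: "nat \<Rightarrow> 'a::field pt \<Rightarrow> bool" where
  "plane_class i c =
     (if i = 1 then is_osculating c
      else if i = 2 then meet_count c = 2
      else if i = 3 then meet_count c = 3
      else if i = 4 then \<not> is_osculating c \<and> meet_count c = 1
      else if i = 5 then meet_count c = 0
      else False)"

definition is_line :: "'a::field pt \<Rightarrow> 'a pt \<Rightarrow> bool" where
  "is_line u v \<longleftrightarrow> u \<noteq> (0,0,0,0) \<and> (\<forall>l. v \<noteq> smul_pt l u)"

definition planes_through_line :: "'a::field pt \<Rightarrow> 'a pt \<Rightarrow> nat \<Rightarrow> 'a pt set set" where
  "planes_through_line u v i =
     {proj_class c | c. c \<noteq> (0,0,0,0) \<and> pdot c u = 0 \<and> pdot c v = 0 \<and> plane_class i c}"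

definition OD2 :: "'a::field pt \<Rightarrow> 'a pt \<Rightarrow> nat list" where
  "OD2 u v = map (\<lambda>i. card (planes_through_line u v i)) [1,2,3,4,5]"

end

theory Submission
  imports Defs "HOL-Number_Theory.Residues" "HOL-Computational_Algebra.Polynomial"
    "HOL-Library.Product_Plus"
begin

text \<open>Let \<Pi> be the osculating plane through \<ell>. Every other plane through \<ell> is W - a \<Pi> for a
  fixed plane W and some a \<in> F_q. In a parametrisation of the cubic that puts the contact
  point of \<Pi> at infinity, the plane W - a \<Pi> contains the points with parameter x where
  g(x) = a, for a cubic polynomial g. If no plane through \<ell> meets the cubic in two or three
  points, g is injective. Over F_q with q prime to 6 an injective cubic is a shifted cube
  b (x + k)^3 + c: otherwise a point of a conic b^2 + 3 z^2 = e, which exists because squares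
  fill more than half of F_q, yields x \<noteq> y with g(x) = g(y). But then W - c \<Pi> is a second
  osculating plane through \<ell>.\<close>

lemma prime_CHAR_finite_field: "prime CHAR('a::{field,finite})"
  using prime_CHAR_semidom[where 'a = 'a] finite_imp_CHAR_pos[where 'a = 'a] by auto

lemma CHAR_eq_prime_of_card:
  assumes "prime p" and "card (UNIV :: 'a::{field,finite} set) = p ^ n"
  shows "CHAR('a) = p"
proof -
  have "CHAR('a) dvd p ^ n"
    using CHAR_dvd_CARD[where 'a = 'a] assms(2) by simp
  then have "CHAR('a) dvd p"
    using prime_CHAR_finite_field[where 'a = 'a] prime_dvd_power by blast
  then show ?thesis
    using prime_CHAR_finite_field[where 'a = 'a] assms(1) by (simp add: primes_dvd_imp_eq)
qed

lemma of_nat_prime_neq_zero: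
  assumes "prime m" and "m \<noteq> CHAR('a::{field,finite})"
  shows "(of_nat m :: 'a) \<noteq> 0"
proof
  assume "(of_nat m :: 'a) = 0"
  then have "CHAR('a) dvd m" by (simp add: of_nat_eq_0_iff_char_dvd)
  with assms show False
    using prime_CHAR_finite_field[where 'a = 'a] primes_dvd_imp_eq by blast
qed

lemma card_UNIV_lt_twice_card_squares:
  "card (UNIV :: 'a::{field,finite} set) < 2 * card (range (\<lambda>x::'a. x^2))"
proof -
  let ?S = "range (\<lambda>x::'a. x^2)"
  define root where "root y = (SOME r. r^2 = y)" for y :: 'a
  define g where "g x = (x^2, x = root (x^2))" for x :: 'a
  \<comment> \<open>x is recovered from its square up to sign, and the flag fixes the sign;
    0 never gets the flag False.\<close>
  have "inj g"
  proof (rule injI)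
    fix x y assume "g x = g y"
    then have sq: "x^2 = y^2" and flag: "(x = root (x^2)) = (y = root (x^2))"
      unfolding g_def by auto
    have "root (x^2) ^ 2 = x^2" unfolding root_def by (rule someI) simp
    then show "x = y" using sq flag by (metis power2_eq_iff)
  qed
  moreover have "g ` UNIV \<subseteq> ?S \<times> UNIV - {(0, False)}"
  proof -
    have "root 0 = 0" unfolding root_def by (rule someI2[of _ 0]) auto
    then show ?thesis unfolding g_def by auto
  qed
  ultimately have "card (UNIV :: 'a set) \<le> card (?S \<times> (UNIV :: bool set) - {(0, False)})"
    by (intro card_inj_on_le) auto
  also have "\<dots> < 2 * card ?S"
    using card_gt_0_iff[of ?S] by (simp add: card_cartesian_product)
  finally show ?thesis .
qed

lemma exists_square_plus_scaled_square:
  fixes k e :: "'a::{field,finite}"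
  assumes "k \<noteq> 0"
  shows "\<exists>b z. b^2 + k * z^2 = e"
proof (rule ccontr)
  assume none: "\<not> ?thesis"
  let ?S = "range (\<lambda>x::'a. x^2)"
  let ?T = "(\<lambda>y. e - k * y) ` ?S"
  \<comment> \<open>Both the squares and their images under y \<mapsto> e - k y fill more than half of the field.\<close>
  have "inj_on (\<lambda>y. e - k * y) ?S" using assms by (auto simp: inj_on_def)
  then have "card ?T = card ?S" by (rule card_image)
  moreover have "?S \<inter> ?T = {}" using none by (auto simp: algebra_simps)
  then have "card ?S + card ?T \<le> card (UNIV :: 'a set)"
    by (metis card_Un_disjoint card_mono finite subset_UNIV)
  ultimately show False using card_UNIV_lt_twice_card_squares[where 'a = 'a] by linarith
qed

lemma exists_conic_point_nonzero_first:
  fixes e :: "'a::{field,finite}"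
  assumes "(2::'a) \<noteq> 0" and "(3::'a) \<noteq> 0" and "e \<noteq> 0"
  shows "\<exists>b z. b \<noteq> 0 \<and> b^2 + 3 * z^2 = e"
proof -
  obtain b z :: 'a where bz: "b^2 + 3 * z^2 = e"
    using exists_square_plus_scaled_square assms(2) by blast
  show ?thesis
  proof (cases "b = 0")
    case False
    with bz show ?thesis by blast
  next
    case True
    define w where "w = z / 2"
    have "z = 2 * w" unfolding w_def using assms(1) by simp
    with True bz assms(2,3) have "(3 * w)^2 + 3 * w^2 = e" and "3 * w \<noteq> 0"
      by (auto simp: power2_eq_square)
    then show ?thesis by blast
  qed
qed

lemma inj_cubic_imp_shifted_cube:
  fixes A B C D :: "'a::{field,finite}"
  assumes "(2::'a) \<noteq> 0" and "(3::'a) \<noteq> 0" and "A \<noteq> 0"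
    and inj: "inj (\<lambda>x. A * x^3 + B * x^2 + C * x + D)"
  shows "\<exists>k. B = 3 * A * k \<and> C = 3 * A * k^2"
proof (rule ccontr)
  assume not_cube: "\<not> ?thesis"
  define k where "k = B / (3 * A)"
  have B: "B = 3 * A * k" unfolding k_def using assms(2,3) by simp
  define e where "e = 3 * k^2 - C / A"
  have "e \<noteq> 0"
  proof
    assume "e = 0"
    then have "C = 3 * A * k^2" unfolding e_def using assms(3) by (simp add: field_simps)
    with B not_cube show False by blast
  qed
  then obtain b z where "b \<noteq> 0" and bz: "b^2 + 3 * z^2 = e"
    using exists_conic_point_nonzero_first assms(1,2) by blast
  define x where "x = z - k + b"
  define y where "y = z - k - b"
  have "x \<noteq> y" unfolding x_def y_def using \<open>b \<noteq> 0\<close> assms(1) by simp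
  \<comment> \<open>b and z are chosen so that the difference quotient of the cubic vanishes at x, y.\<close>
  have "A * (x^2 + x * y + y^2) + B * (x + y) + C = A * (b^2 + 3 * z^2 - e)"
    unfolding x_def y_def e_def B using assms(3)
    by (simp add: field_simps power2_eq_square)
  also have "\<dots> = 0" using bz by simp
  finally have "A * (x^2 + x * y + y^2) + B * (x + y) + C = 0" .
  moreover have "(A * x^3 + B * x^2 + C * x + D) - (A * y^3 + B * y^2 + C * y + D)
      = (x - y) * (A * (x^2 + x * y + y^2) + B * (x + y) + C)"
    by (simp add: algebra_simps power2_eq_square power3_eq_cube)
  ultimately have "A * x^3 + B * x^2 + C * x + D = A * y^3 + B * y^2 + C * y + D"
    by simp
  with inj have "x = y" by (rule injD)
  with \<open>x \<noteq> y\<close> show False ..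
qed

lemma pdot_smul_pt: "pdot (smul_pt l c) x = l * pdot c (x :: 'a::field pt)"
  by (cases c, cases x) (simp add: pdot_def smul_pt_def algebra_simps)

lemma pdot_diff: "pdot (c - d) x = pdot c x - pdot d (x :: 'a::field pt)"
  by (cases c, cases d, cases x) (simp add: pdot_def algebra_simps)

lemma smul_pt_smul_pt: "smul_pt l (smul_pt k x) = smul_pt (l * k) (x :: 'a::field pt)"
  by (cases x) (simp add: smul_pt_def mult.assoc)

lemma smul_pt_one: "smul_pt 1 x = (x :: 'a::field pt)"
  by (cases x) (simp add: smul_pt_def)

lemma smul_pt_add: "smul_pt (a + b) x = smul_pt a x + smul_pt b (x :: 'a::field pt)"
  by (cases x) (simp add: smul_pt_def algebra_simps)

lemma smul_pt_zero: "smul_pt 0 x = ((0, 0, 0, 0) :: 'a::field pt)"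
  by (cases x) (simp add: smul_pt_def)

lemma proj_class_smul_pt:
  assumes "k \<noteq> 0"
  shows "proj_class (smul_pt k x) = proj_class (x :: 'a::field pt)"
  unfolding proj_class_def
proof (intro equalityI subsetI)
  fix y assume "y \<in> {smul_pt l (smul_pt k x) |l. l \<noteq> 0}"
  then obtain l where "l \<noteq> 0" and "y = smul_pt (l * k) x" by (auto simp: smul_pt_smul_pt)
  with assms show "y \<in> {smul_pt l x |l. l \<noteq> 0}" by auto
next
  fix y assume "y \<in> {smul_pt l x |l. l \<noteq> 0}"
  then obtain l where "l \<noteq> 0" and "y = smul_pt (l / k) (smul_pt k x)"
    using assms by (auto simp: smul_pt_smul_pt)
  with assms show "y \<in> {smul_pt l (smul_pt k x) |l. l \<noteq> 0}" by auto
qed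

lemma proj_class_eq_imp_smul_pt:
  assumes "proj_class x = proj_class (y :: 'a::field pt)"
  shows "\<exists>l. l \<noteq> 0 \<and> x = smul_pt l y"
proof -
  have "x \<in> proj_class x"
    unfolding proj_class_def by (auto intro!: exI[of _ 1] simp: smul_pt_one)
  with assms show ?thesis unfolding proj_class_def by blast
qed

definition normalized_osculating :: "'a::field pt \<Rightarrow> bool" where
  "normalized_osculating c \<longleftrightarrow> c = (1, 0, 0, 0) \<or> (\<exists>t. c = osc_plane t)"

lemma is_osculating_iff:
  "is_osculating c \<longleftrightarrow> (\<exists>w l. normalized_osculating w \<and> l \<noteq> 0 \<and> c = smul_pt l w)"
proof
  assume "is_osculating c"
  then obtain w where "normalized_osculating w" and "proj_class c = proj_class w"
    unfolding is_osculating_def normalized_osculating_def by blast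
  then show "\<exists>w l. normalized_osculating w \<and> l \<noteq> 0 \<and> c = smul_pt l w"
    using proj_class_eq_imp_smul_pt by blast
next
  assume "\<exists>w l. normalized_osculating w \<and> l \<noteq> 0 \<and> c = smul_pt l w"
  then obtain w l where "normalized_osculating w" and "proj_class c = proj_class w"
    using proj_class_smul_pt by blast
  then show "is_osculating c"
    unfolding is_osculating_def normalized_osculating_def by blast
qed

lemma is_osculating_smul_pt:
  "normalized_osculating w \<Longrightarrow> l \<noteq> 0 \<Longrightarrow> is_osculating (smul_pt l w)"
  using is_osculating_iff by blast

lemma is_osculating_smul_pt_iff:
  assumes "l \<noteq> 0"
  shows "is_osculating (smul_pt l c) \<longleftrightarrow> is_osculating (c :: 'a::field pt)"
  unfolding is_osculating_def using proj_class_smul_pt[OF assms] by simp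

lemma meet_count_le_3:
  fixes c :: "'a::{field,finite} pt"
  assumes "c \<noteq> (0, 0, 0, 0)"
  shows "meet_count c \<le> 3"
proof -
  obtain c0 c1 c2 c3 where c: "c = (c0, c1, c2, c3)" by (cases c)
  define p where "p = [:c0, c1, c2, c3:]"
  define R where "R = {t. poly p t = 0}"
  have "p \<noteq> 0" using assms unfolding c p_def by auto
  then have R: "card R \<le> degree p" unfolding R_def by (rule card_poly_roots_bound)
  have deg3: "degree p \<le> 3" unfolding p_def
    by (rule degree_le) (auto simp: coeff_pCons split: nat.split)
  have deg2: "degree p \<le> 2" if "c3 = 0"
    unfolding p_def using that
    by (intro degree_le) (auto simp: coeff_pCons split: nat.split)
  define E :: "'a pt set" where "E = (if c3 = 0 then {(0, 0, 0, 1)} else {})"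
  have "{P \<in> twisted_cubic. pdot c P = 0} \<subseteq> (\<lambda>t. (1, t, t^2, t^3)) ` R \<union> E"
    unfolding twisted_cubic_def R_def p_def E_def c
    by (auto simp: pdot_def algebra_simps power2_eq_square power3_eq_cube)
  then have "meet_count c \<le> card ((\<lambda>t. (1, t, t^2, t^3)) ` R \<union> E)"
    unfolding meet_count_def by (rule card_mono[rotated]) simp
  also have "\<dots> \<le> card R + card E"
    by (rule order_trans[OF card_Un_le add_mono[OF card_image_le]]) auto
  finally show ?thesis using R deg3 deg2
    unfolding E_def by (auto split: if_splits)
qed

lemma two_le_meet_count:
  assumes "P \<in> twisted_cubic" and "Q \<in> twisted_cubic" and "P \<noteq> Q"
    and "pdot c P = 0" and "pdot c Q = 0"
  shows "2 \<le> meet_count (c :: 'a::{field,finite} pt)"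
proof -
  have "card {P, Q} \<le> meet_count c"
    unfolding meet_count_def using assms by (intro card_mono) auto
  with assms(3) show ?thesis by simp
qed

lemma is_osculating_cube_coeffs:
  fixes u v :: "'a::field"
  assumes "u \<noteq> 0 \<or> v \<noteq> 0"
  shows "is_osculating (u^3, 3 * u^2 * v, 3 * u * v^2, v^3)"
proof (cases "v = 0")
  case True
  then have "(u^3, 3 * u^2 * v, 3 * u * v^2, v^3) = smul_pt (u^3) (1, 0, 0, 0)"
    by (simp add: smul_pt_def)
  moreover have "is_osculating (smul_pt (u^3) ((1, 0, 0, 0) :: 'a pt))"
    using True assms by (intro is_osculating_smul_pt) (simp_all add: normalized_osculating_def)
  ultimately show ?thesis by simp
next
  case False
  then have "(u^3, 3 * u^2 * v, 3 * u * v^2, v^3) = smul_pt (v^3) (osc_plane (- u / v))"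
    by (simp add: smul_pt_def osc_plane_def field_simps power2_eq_square power3_eq_cube)
  moreover have "is_osculating (smul_pt (v^3) (osc_plane (- u / v)))"
    using False by (intro is_osculating_smul_pt) (auto simp: normalized_osculating_def)
  ultimately show ?thesis by simp
qed

lemma two_le_meet_count_if_not_inj:
  fixes M :: "'a \<Rightarrow> 'b::{field,finite} pt" and chart :: "'a \<Rightarrow> 'b pt"
  assumes "inj chart" and "range chart \<subseteq> twisted_cubic" and "\<not> inj g"
    and "\<And>x. pdot (M (g x)) (chart x) = 0"
  shows "\<exists>a. 2 \<le> meet_count (M a)"
proof -
  obtain x y where "x \<noteq> y" and "g x = g y" using assms(3) unfolding inj_def by blast
  have "chart x \<in> twisted_cubic" and "chart y \<in> twisted_cubic" using assms(2) by auto
  moreover have "chart x \<noteq> chart y" using assms(1) \<open>x \<noteq> y\<close> by (auto dest: injD)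
  moreover have "pdot (M (g x)) (chart x) = 0" by (rule assms(4))
  moreover have "pdot (M (g x)) (chart y) = 0" using assms(4)[of y] \<open>g x = g y\<close> by simp
  ultimately have "2 \<le> meet_count (M (g x))" by (rule two_le_meet_count)
  then show ?thesis ..
qed

lemma pencil_at_infinity_secant_or_osculating:
  fixes W :: "'a::{field,finite} pt"
  assumes "(2::'a) \<noteq> 0" and "(3::'a) \<noteq> 0"
  shows "\<exists>a. 2 \<le> meet_count (W - smul_pt a (1, 0, 0, 0))
           \<or> is_osculating (W - smul_pt a (1, 0, 0, 0))"
proof -
  obtain w0 w1 w2 w3 where W: "W = (w0, w1, w2, w3)" by (cases W)
  let ?M = "\<lambda>a. W - smul_pt a (1, 0, 0, 0)"
  have M: "?M a = (w0 - a, w1, w2, w3)" for a by (simp add: W smul_pt_def)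
  define g where "g t = w3 * t^3 + w2 * t^2 + w1 * t + w0" for t
  consider "w3 = 0" | "w3 \<noteq> 0" "\<not> inj g" | "w3 \<noteq> 0" "inj g" by blast
  then show ?thesis
  proof cases
    case 1
    then have "2 \<le> meet_count (?M w0)"
      by (intro two_le_meet_count[of "(1, 0, 0, 0)" "(0, 0, 0, 1)"])
        (auto simp: M pdot_def twisted_cubic_def)
    then show ?thesis by blast
  next
    case 2
    have "\<exists>a. 2 \<le> meet_count (?M a)"
    proof (rule two_le_meet_count_if_not_inj[OF _ _ \<open>\<not> inj g\<close>])
      show "inj (\<lambda>t. (1::'a, t, t^2, t^3))" by (rule injI) simp
      show "range (\<lambda>t. (1::'a, t, t^2, t^3)) \<subseteq> twisted_cubic"
        by (auto simp: twisted_cubic_def)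
      show "pdot (?M (g t)) (1, t, t^2, t^3) = 0" for t
        by (simp add: M g_def pdot_def algebra_simps)
    qed
    then show ?thesis by blast
  next
    case 3
    then obtain k where k: "w2 = 3 * w3 * k" "w1 = 3 * w3 * k^2"
      using inj_cubic_imp_shifted_cube assms unfolding g_def by blast
    have "?M (w0 - w3 * k^3) = smul_pt w3 (k^3, 3 * k^2 * 1, 3 * k * 1^2, 1^3)"
      by (simp add: W k smul_pt_def algebra_simps)
    then have "is_osculating (?M (w0 - w3 * k^3))"
      using is_osculating_smul_pt_iff[OF \<open>w3 \<noteq> 0\<close>] is_osculating_cube_coeffs[of k 1]
      by simp
    then show ?thesis by blast
  qed
qed

\<comment> \<open>Moves the contact point t0 of the osculating plane to x = \<infinity>, so that the pencil through
  \<Pi>(t0) can be treated like the pencil through \<Pi>(\<infinity>).\<close>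
definition cubic_chart :: "'a::field \<Rightarrow> 'a \<Rightarrow> 'a pt" where
  "cubic_chart t0 x =
     (if x = 0 then (0, 0, 0, 1) else (1, t0 + 1 / x, (t0 + 1 / x)^2, (t0 + 1 / x)^3))"

lemma cubic_chart_in_twisted_cubic: "cubic_chart t0 x \<in> twisted_cubic"
  unfolding cubic_chart_def twisted_cubic_def by auto

lemma inj_cubic_chart: "inj (cubic_chart t0)"
  by (rule injI) (auto simp: cubic_chart_def split: if_splits)

lemma pdot_osc_plane: "pdot (osc_plane t0) (1, t, t^2, t^3) = (t - t0)^3"
  by (simp add: pdot_def osc_plane_def algebra_simps power2_eq_square power3_eq_cube)

lemma pdot_pencil_osc_plane_cubic_chart:
  fixes w0 w1 w2 w3 t0 x :: "'a::field"
  defines "b0 \<equiv> w0 + w1 * t0 + w2 * t0^2 + w3 * t0^3"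
    and "b1 \<equiv> w1 + 2 * w2 * t0 + 3 * w3 * t0^2"
    and "b2 \<equiv> w2 + 3 * w3 * t0"
  shows "pdot ((w0, w1, w2, w3) - smul_pt (b0 * x^3 + b1 * x^2 + b2 * x + w3) (osc_plane t0))
           (cubic_chart t0 x) = 0"
proof (cases "x = 0")
  case True
  then show ?thesis by (simp add: cubic_chart_def pdot_def osc_plane_def smul_pt_def)
next
  case False
  define t where "t = t0 + 1 / x"
  \<comment> \<open>Taylor expansion of the cubic at t0, evaluated at t - t0 = 1/x.\<close>
  have "pdot (w0, w1, w2, w3) (1, t, t^2, t^3) = b0 + b1 / x + b2 / x^2 + w3 / x^3"
    unfolding t_def b0_def b1_def b2_def pdot_def using False
    by (simp add: field_simps power2_eq_square power3_eq_cube)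
  also have "\<dots> = (b0 * x^3 + b1 * x^2 + b2 * x + w3) * (t - t0)^3"
    unfolding t_def using False by (simp add: field_simps power2_eq_square power3_eq_cube)
  finally show ?thesis
    using False by (simp add: cubic_chart_def pdot_diff pdot_smul_pt pdot_osc_plane t_def)
qed

lemma pencil_at_osc_plane_secant_or_osculating:
  fixes W :: "'a::{field,finite} pt"
  assumes "(2::'a) \<noteq> 0" and "(3::'a) \<noteq> 0"
  shows "\<exists>a. 2 \<le> meet_count (W - smul_pt a (osc_plane t0))
           \<or> is_osculating (W - smul_pt a (osc_plane t0))"
proof -
  obtain w0 w1 w2 w3 where W: "W = (w0, w1, w2, w3)" by (cases W)
  let ?M = "\<lambda>a. W - smul_pt a (osc_plane t0)"
  define b0 where "b0 = w0 + w1 * t0 + w2 * t0^2 + w3 * t0^3"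
  define b1 where "b1 = w1 + 2 * w2 * t0 + 3 * w3 * t0^2"
  define b2 where "b2 = w2 + 3 * w3 * t0"
  define g where "g x = b0 * x^3 + b1 * x^2 + b2 * x + w3" for x
  consider "b0 = 0" | "b0 \<noteq> 0" "\<not> inj g" | "b0 \<noteq> 0" "inj g" by blast
  then show ?thesis
  proof cases
    case 1
    then have "2 \<le> meet_count (?M w3)"
      by (intro two_le_meet_count[of "(1, t0, t0^2, t0^3)" "(0, 0, 0, 1)"])
        (auto simp: W b0_def pdot_diff pdot_smul_pt pdot_osc_plane twisted_cubic_def,
         simp_all add: pdot_def osc_plane_def)
    then show ?thesis by blast
  next
    case 2
    have "\<exists>a. 2 \<le> meet_count (?M a)"
    proof (rule two_le_meet_count_if_not_inj[OF inj_cubic_chart _ \<open>\<not> inj g\<close>])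
      show "range (cubic_chart t0) \<subseteq> twisted_cubic"
        using cubic_chart_in_twisted_cubic by blast
      show "pdot (?M (g x)) (cubic_chart t0 x) = 0" for x
        unfolding W g_def b0_def b1_def b2_def by (rule pdot_pencil_osc_plane_cubic_chart)
    qed
    then show ?thesis by blast
  next
    case 3
    then obtain k where k: "b1 = 3 * b0 * k" "b2 = 3 * b0 * k^2"
      using inj_cubic_imp_shifted_cube assms unfolding g_def by blast
    \<comment> \<open>Then g x = b0 (x + k)^3 + const, and the plane for that constant is osculating
      at the parameter t0 - 1/k (at infinity if k = 0).\<close>
    have "?M (w3 - b0 * k^3)
        = smul_pt b0 ((1 - k * t0)^3, 3 * (1 - k * t0)^2 * k, 3 * (1 - k * t0) * k^2, k^3)"
    proof -
      have "W = (b0 - b1 * t0 + b2 * t0^2 - w3 * t0^3, b1 - 2 * b2 * t0 + 3 * w3 * t0^2,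
          b2 - 3 * w3 * t0, w3)"
        unfolding W b0_def b1_def b2_def by (simp add: algebra_simps power2_eq_square power3_eq_cube)
      then show ?thesis
        by (simp add: k smul_pt_def osc_plane_def algebra_simps power2_eq_square power3_eq_cube)
    qed
    then have "is_osculating (?M (w3 - b0 * k^3))"
      using is_osculating_smul_pt_iff[OF \<open>b0 \<noteq> 0\<close>]
        is_osculating_cube_coeffs[of "1 - k * t0" k] by (cases "k = 0") auto
    then show ?thesis by blast
  qed
qed

lemma pencil_secant_or_osculating:
  fixes W Osc :: "'a::{field,finite} pt"
  assumes "(2::'a) \<noteq> 0" and "(3::'a) \<noteq> 0" and "normalized_osculating Osc"
  shows "\<exists>a. 2 \<le> meet_count (W - smul_pt a Osc) \<or> is_osculating (W - smul_pt a Osc)"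
  using assms pencil_at_infinity_secant_or_osculating pencil_at_osc_plane_secant_or_osculating
  unfolding normalized_osculating_def by blast

lemma proj_class_in_planes_through_line:
  assumes "c \<noteq> (0, 0, 0, 0)" and "pdot c u = 0" and "pdot c v = 0" and "plane_class i c"
  shows "proj_class c \<in> planes_through_line u v i"
  unfolding planes_through_line_def using assms by blast

lemma planes_through_lineE:
  assumes "X \<in> planes_through_line u v i"
  obtains c where "X = proj_class c" and "c \<noteq> (0, 0, 0, 0)" and "pdot c u = 0" and "pdot c v = 0"
    and "plane_class i c"
  using assms unfolding planes_through_line_def by blast

lemma second_osculating_plane_through_line:
  fixes u v W Osc :: "'a::{field,finite} pt"
  assumes "(2::'a) \<noteq> 0" and "(3::'a) \<noteq> 0"
    and "planes_through_line u v 2 = {}" and "planes_through_line u v 3 = {}"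
    and "normalized_osculating Osc" and "pdot Osc u = 0" and "pdot Osc v = 0"
    and "pdot W u = 0" and "pdot W v = 0" and W: "\<And>l. W \<noteq> smul_pt l Osc"
  shows "\<exists>c. c \<noteq> (0, 0, 0, 0) \<and> pdot c u = 0 \<and> pdot c v = 0 \<and> is_osculating c
           \<and> proj_class c \<noteq> proj_class Osc"
proof -
  obtain a where a: "2 \<le> meet_count (W - smul_pt a Osc) \<or> is_osculating (W - smul_pt a Osc)"
    using pencil_secant_or_osculating assms(1,2,5) by blast
  define c where "c = W - smul_pt a Osc"
  have not_multiple: "c \<noteq> smul_pt m Osc" for m
  proof
    assume "c = smul_pt m Osc"
    then have "W = smul_pt (a + m) Osc" unfolding c_def by (simp add: smul_pt_add algebra_simps)
    with W show False by blast
  qed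
  then have "c \<noteq> (0, 0, 0, 0)" using smul_pt_zero by metis
  moreover have "pdot c u = 0" and "pdot c v = 0"
    unfolding c_def using assms(6-9) by (simp_all add: pdot_diff pdot_smul_pt)
  moreover have "\<not> 2 \<le> meet_count c"
  proof
    assume "2 \<le> meet_count c"
    with meet_count_le_3[OF \<open>c \<noteq> (0, 0, 0, 0)\<close>]
    have "plane_class 2 c \<or> plane_class 3 c" by (auto simp: plane_class_def)
    with calculation assms(3,4) show False
      using proj_class_in_planes_through_line by blast
  qed
  moreover have "proj_class c \<noteq> proj_class Osc"
    using proj_class_eq_imp_smul_pt not_multiple by blast
  ultimately show ?thesis using a unfolding c_def by blast
qed

lemma two_le_card_osculating_planes_through_line:
  fixes u v c1 c4 :: "'a::{field,finite} pt"
  assumes "(2::'a) \<noteq> 0" and "(3::'a) \<noteq> 0"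
    and "planes_through_line u v 2 = {}" and "planes_through_line u v 3 = {}"
    and c1: "pdot c1 u = 0" "pdot c1 v = 0" "is_osculating c1"
    and c4: "c4 \<noteq> (0, 0, 0, 0)" "pdot c4 u = 0" "pdot c4 v = 0" "\<not> is_osculating c4"
  shows "2 \<le> card (planes_through_line u v 1)"
proof -
  obtain Osc l where Osc: "normalized_osculating Osc" and "l \<noteq> 0" and c1_Osc: "c1 = smul_pt l Osc"
    using c1(3) is_osculating_iff by blast
  have "is_osculating Osc" using is_osculating_smul_pt[OF Osc, of 1] by (simp add: smul_pt_one)
  have "Osc \<noteq> (0, 0, 0, 0)" using Osc by (auto simp: normalized_osculating_def osc_plane_def)
  have "pdot Osc u = 0" and "pdot Osc v = 0"
    using c1(1,2) c1_Osc \<open>l \<noteq> 0\<close> by (simp_all add: pdot_smul_pt)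
  moreover have "c4 \<noteq> smul_pt m Osc" for m
  proof (cases "m = 0")
    case True
    with c4(1) show ?thesis by (simp add: smul_pt_zero)
  next
    case False
    with c4(4) show ?thesis using is_osculating_smul_pt[OF Osc] by blast
  qed
  ultimately obtain c where "c \<noteq> (0, 0, 0, 0)" "pdot c u = 0" "pdot c v = 0" "is_osculating c"
    and "proj_class c \<noteq> proj_class Osc"
    using second_osculating_plane_through_line[OF assms(1-4) Osc] c4(2,3) by blast
  with \<open>is_osculating Osc\<close> \<open>Osc \<noteq> (0, 0, 0, 0)\<close> \<open>pdot Osc u = 0\<close> \<open>pdot Osc v = 0\<close>
  have "{proj_class c, proj_class Osc} \<subseteq> planes_through_line u v 1"
    by (auto intro!: proj_class_in_planes_through_line simp: plane_class_def)
  then have "card {proj_class c, proj_class Osc} \<le> card (planes_through_line u v 1)"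
    by (intro card_mono) simp_all
  with \<open>proj_class c \<noteq> proj_class Osc\<close> show ?thesis by simp
qed

theorem mainTheorem9:
  fixes u v :: "'a::{field,finite} pt" and p n :: nat
  assumes "prime p" and "p \<noteq> 2" and "p \<noteq> 3" and "card (UNIV :: 'a set) = p ^ n"
    and "is_line u v"
  shows "\<not> (\<exists>d e. OD2 u v = [1, 0, 0, d, e] \<and> d \<ge> 1)"
proof
  assume "\<exists>d e. OD2 u v = [1, 0, 0, d, e] \<and> d \<ge> 1"
  then obtain d e where OD2: "OD2 u v = [1, 0, 0, d, e]" and "d \<ge> 1" by blast
  let ?L = "planes_through_line u v"
  have char: "(2::'a) \<noteq> 0" "(3::'a) \<noteq> 0"
    using of_nat_prime_neq_zero[where 'a = 'a and m = 2]
      of_nat_prime_neq_zero[where 'a = 'a and m = 3] CHAR_eq_prime_of_card[OF assms(1,4)] assms(2,3) by simp_all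
  from OD2 \<open>d \<ge> 1\<close> have "card (?L 1) = 1" "?L 2 = {}" "?L 3 = {}" "?L 4 \<noteq> {}"
    by (auto simp: OD2_def)
  then obtain X1 X4 where "X1 \<in> ?L 1" and "X4 \<in> ?L 4" by (metis card_1_singletonE ex_in_conv insertI1)
  obtain c1 where "pdot c1 u = 0" "pdot c1 v = 0" "is_osculating c1"
    using \<open>X1 \<in> ?L 1\<close> by (rule planes_through_lineE) (simp add: plane_class_def)
  moreover obtain c4 where "c4 \<noteq> (0, 0, 0, 0)" "pdot c4 u = 0" "pdot c4 v = 0" "\<not> is_osculating c4"
    using \<open>X4 \<in> ?L 4\<close> by (rule planes_through_lineE) (simp add: plane_class_def)
  ultimately have "2 \<le> card (?L 1)"
    using two_le_card_osculating_planes_through_line[OF char \<open>?L 2 = {}\<close> \<open>?L 3 = {}\<close>] by blast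
  with \<open>card (?L 1) = 1\<close> show False by simp
qed

end
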